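(* Let $L$ be a geometric lattice of rank $r+1$ and let $\Delta(L)$ be its order complex, with $h$-vector $(h_0,\dots,h_r)$. Then for every integer $i$ with $1\le i \le r/2$, $$h_{i-1}\le h_i \qquad\text{and}\qquad h_i\le h_{r-i}.$$
   Context: A geometric lattice is a finite graded atomic lattice whose rank function $\rho$ satisfies $\rho(x\vee y)+\rho(x\wedge y)\le \rho(x)+\rho(y)$. The order complex $\Delta(L)$ is the simplicial complex whose vertices are the elements of $L-\{\hat 0,\hat 1\}$ and whose faces are the chains $x_1<\dots<x_k$ in $L-\{\hat 0,\hat 1\}$; it is pure of dimension $r-1$ (facets have $r$ vertices). Let $f_i$ be the number of faces with $i$ vertices ($f_0=1$ for the empty face), $0\le i\le r$. The $h$-vector $(h_0,\dots,h_r)$ is defined by $\sum_{i=0}^r f_i (x-1)^{r-i}=\sum_{i=0}^r h_i x^{r-i}$. *)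

theory Defs
  imports "HOL-Computational_Algebra.Polynomial"
begin

definition covers :: "'a::order \<Rightarrow> 'a \<Rightarrow> bool" where
  "covers x y \<longleftrightarrow> x < y \<and> \<not> (\<exists>z. x < z \<and> z < y)"

definition atoms :: "'a::bounded_lattice set" where
  "atoms = {a. covers bot a}"

definition graded_rank :: "('a::bounded_lattice \<Rightarrow> nat) \<Rightarrow> bool" where
  "graded_rank \<rho> \<longleftrightarrow> \<rho> bot = 0 \<and> (\<forall>x y. covers x y \<longrightarrow> \<rho> y = \<rho> x + 1)"

text \<open>Atomic: every element is the join of the atoms in some set (join of the
  empty set being bottom).\<close>
definition atomic_lattice :: "'a::bounded_lattice itself \<Rightarrow> bool" where
  "atomic_lattice _ \<longleftrightarrow> (\<forall>x::'a. \<exists>A. A \<subseteq> atoms \<and> finite A \<and> x = Sup_fin (insert bot A))"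

definition geometric_lattice :: "('a::{finite,bounded_lattice} \<Rightarrow> nat) \<Rightarrow> bool" where
  "geometric_lattice \<rho> \<longleftrightarrow> graded_rank \<rho> \<and> atomic_lattice TYPE('a) \<and>
     (\<forall>x y. \<rho> (sup x y) + \<rho> (inf x y) \<le> \<rho> x + \<rho> y)"

definition is_chain :: "'a::order set \<Rightarrow> bool" where
  "is_chain S \<longleftrightarrow> (\<forall>x\<in>S. \<forall>y\<in>S. x \<le> y \<or> y \<le> x)"

definition faces :: "'a::{finite,bounded_lattice} itself \<Rightarrow> nat \<Rightarrow> 'a set set" where
  "faces _ i = {S. S \<subseteq> UNIV - {bot, top} \<and> is_chain S \<and> card S = i}"

definition fvec :: "'a::{finite,bounded_lattice} itself \<Rightarrow> nat \<Rightarrow> nat" where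
  "fvec T i = card (faces T i)"

text \<open>h-vector: sum_{i=0}^r f_i (x-1)^(r-i) = sum_{i=0}^r h_i x^(r-i), so h_i is
  the coefficient of x^(r-i).\<close>
definition hvec :: "'a::{finite,bounded_lattice} itself \<Rightarrow> nat \<Rightarrow> nat \<Rightarrow> int" where
  "hvec T r i = coeff (\<Sum>j\<le>r. smult (int (fvec T j)) ([:-1, 1:] ^ (r - j))) (r - i)"

end

(*
  Order the atoms of L and label every cover z < w by the least atom below w but not below z.
  In a geometric lattice this labelling has two properties.

  Every chain of L - {bot, top} lies on exactly one maximal chain whose descents occur only at
  ranks of the chain.  Grouping the faces of the order complex by this maximal chain turns
  sum_i f_i (x - 1)^(r - i) into sum_c x^(r - des c), so h_d is the number of maximal chains with
  d descents.

  The label sequences of maximal chains are permutations of distinct atoms, and by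
  semimodularity an adjacent ascent a b can always be swapped: the other middle element of the
  covering diamond gives a maximal chain with labels b a.  On a set of permutations of length n
  closed under these swaps, Foata-Strehl valley hopping sends a pair (w, double ascent y) to a
  pair (w', double descent y), injectively, keeping the number k of peaks and raising the number
  of descents by one.  Counting both sides gives b_d (n - 1 - k - d) <= b_(d+1) (d + 1 - k) for
  the number b_d of such permutations with k peaks and d descents, so b_(k+e) / binomial(n-1-2k, e)
  increases with e.  Hence b_(i-1) <= b_i and b_i <= b_(n-1-i) for 2i < n, and summing over k
  gives h_(i-1) <= h_i and h_i <= h_(r-i).
*)
theory Submission
  imports Defs
begin

section \<open>Descents, peaks and valley hopping\<close>

fun adjacent :: "'b list \<Rightarrow> 'b \<Rightarrow> 'b \<Rightarrow> bool" where
  "adjacent (x # y # xs) a b \<longleftrightarrow> (a = x \<and> b = y) \<or> adjacent (y # xs) a b"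
| "adjacent _ a b \<longleftrightarrow> False"

lemma adjacent_Cons: "adjacent (x # xs) a b \<longleftrightarrow> (xs \<noteq> [] \<and> a = x \<and> b = hd xs) \<or> adjacent xs a b"
  by (cases xs) auto

lemma adjacent_append:
  "adjacent (xs @ ys) a b \<longleftrightarrow>
     adjacent xs a b \<or> adjacent ys a b \<or> (xs \<noteq> [] \<and> ys \<noteq> [] \<and> a = last xs \<and> b = hd ys)"
  by (induction xs) (auto simp: adjacent_Cons)

lemma adjacent_conv_nth: "adjacent xs a b \<longleftrightarrow> (\<exists>j. Suc j < length xs \<and> xs ! j = a \<and> xs ! Suc j = b)"
proof (induction xs)
  case (Cons x xs)
  have ex_nat: "(\<exists>j. P j) \<longleftrightarrow> P 0 \<or> (\<exists>j. P (Suc j))" for P :: "nat \<Rightarrow> bool"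
    by (metis not0_implies_Suc)
  show ?case unfolding ex_nat[where P = "\<lambda>j. Suc j < length (x # xs) \<and> _ j"] using Cons
    by (auto simp: adjacent_Cons hd_conv_nth)
qed simp

lemma adjacent_in_set: "adjacent xs a b \<Longrightarrow> a \<in> set xs \<and> b \<in> set xs"
  by (auto simp: adjacent_conv_nth)

lemma adjacent_neq: "distinct xs \<Longrightarrow> adjacent xs a b \<Longrightarrow> a \<noteq> b"
  by (auto simp: adjacent_conv_nth nth_eq_iff_index_eq)

lemma not_adjacent_hd: "distinct xs \<Longrightarrow> \<not> adjacent xs a (hd xs)"
  by (cases xs) (auto simp: adjacent_conv_nth nth_eq_iff_index_eq)

lemma not_adjacent_last: "distinct xs \<Longrightarrow> \<not> adjacent xs (last xs) b"
  by (cases xs rule: rev_cases)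
    (auto simp: adjacent_conv_nth nth_eq_iff_index_eq nth_append split: if_splits)

(* A neighbour missing at either end of the list counts as larger: the list is read as framed by
   +\<infinity> on both sides. *)
definition left_larger :: "'b::linorder list \<Rightarrow> 'b \<Rightarrow> bool" where
  "left_larger xs z \<longleftrightarrow> (\<forall>a. adjacent xs a z \<longrightarrow> z < a)"

definition right_larger :: "'b::linorder list \<Rightarrow> 'b \<Rightarrow> bool" where
  "right_larger xs z \<longleftrightarrow> (\<forall>b. adjacent xs z b \<longrightarrow> z < b)"

definition peaks :: "'b::linorder list \<Rightarrow> 'b set" where
  "peaks xs = {z \<in> set xs. \<not> left_larger xs z \<and> \<not> right_larger xs z}"

definition valleys :: "'b::linorder list \<Rightarrow> 'b set" where
  "valleys xs = {z \<in> set xs. left_larger xs z \<and> right_larger xs z}"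

definition double_ascents :: "'b::linorder list \<Rightarrow> 'b set" where
  "double_ascents xs = {z \<in> set xs. \<not> left_larger xs z \<and> right_larger xs z}"

definition double_descents :: "'b::linorder list \<Rightarrow> 'b set" where
  "double_descents xs = {z \<in> set xs. left_larger xs z \<and> \<not> right_larger xs z}"

definition des :: "'b::linorder list \<Rightarrow> nat" where
  "des xs = card {j. Suc j < length xs \<and> xs ! Suc j < xs ! j}"

lemma left_larger_nth:
  assumes "distinct xs" "k < length xs"
  shows "left_larger xs (xs ! k) \<longleftrightarrow> k = 0 \<or> xs ! k < xs ! (k - 1)"
proof -
  have "adjacent xs a (xs ! k) \<longleftrightarrow> 0 < k \<and> a = xs ! (k - 1)" for a
    using assms by (cases k) (auto simp: adjacent_conv_nth nth_eq_iff_index_eq)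
  then show ?thesis by (auto simp: left_larger_def)
qed

lemma right_larger_nth:
  assumes "distinct xs" "k < length xs"
  shows "right_larger xs (xs ! k) \<longleftrightarrow> Suc k = length xs \<or> xs ! k < xs ! Suc k"
proof -
  have "adjacent xs (xs ! k) b \<longleftrightarrow> Suc k < length xs \<and> b = xs ! Suc k" for b
    using assms by (auto simp: adjacent_conv_nth nth_eq_iff_index_eq)
  then show ?thesis using assms(2) by (auto simp: right_larger_def)
qed

lemma des_eq_card_not_right_larger:
  assumes "distinct xs"
  shows "des xs = card {z \<in> set xs. \<not> right_larger xs z}"
proof -
  let ?D = "{j. Suc j < length xs \<and> xs ! Suc j < xs ! j}"
  have "{z \<in> set xs. \<not> right_larger xs z} = (!) xs ` ?D"
  proof (intro set_eqI iffI)
    fix z assume "z \<in> {z \<in> set xs. \<not> right_larger xs z}"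
    then obtain k where "k < length xs" "z = xs ! k" "\<not> right_larger xs (xs ! k)"
      by (auto simp: in_set_conv_nth)
    then show "z \<in> (!) xs ` ?D"
      using assms by (auto simp: right_larger_nth nth_eq_iff_index_eq not_less_iff_gr_or_eq)
  qed (use assms in \<open>auto simp: right_larger_nth\<close>)
  moreover have "inj_on ((!) xs) ?D" using assms by (intro inj_on_nth) auto
  ultimately show ?thesis by (simp add: des_def card_image)
qed

lemma Suc_des_eq_card_left_larger:
  assumes "distinct xs" "xs \<noteq> []"
  shows "Suc (des xs) = card {z \<in> set xs. left_larger xs z}"
proof -
  let ?D = "{j. Suc j < length xs \<and> xs ! Suc j < xs ! j}"
  have "{z \<in> set xs. left_larger xs z} = (!) xs ` insert 0 (Suc ` ?D)"
  proof (intro set_eqI iffI)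
    fix z assume "z \<in> {z \<in> set xs. left_larger xs z}"
    then obtain k where "k < length xs" "z = xs ! k" "left_larger xs (xs ! k)"
      by (auto simp: in_set_conv_nth)
    then show "z \<in> (!) xs ` insert 0 (Suc ` ?D)"
      using assms by (cases k) (auto simp: left_larger_nth)
  qed (use assms in \<open>auto simp: left_larger_nth\<close>)
  moreover have "inj_on ((!) xs) (insert 0 (Suc ` ?D))" using assms by (intro inj_on_nth) auto
  moreover have "finite ?D" by (rule finite_subset[of _ "{..<length xs}"]) auto
  ultimately show ?thesis by (simp add: des_def card_image)
qed

lemma card_double_descents_peaks:
  assumes "distinct xs"
  shows "card (double_descents xs) + card (peaks xs) = des xs"
proof -
  have "{z \<in> set xs. \<not> right_larger xs z} = peaks xs \<union> double_descents xs"
    by (auto simp: peaks_def double_descents_def)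
  moreover have "peaks xs \<inter> double_descents xs = {}"
    by (auto simp: peaks_def double_descents_def)
  ultimately show ?thesis
    using des_eq_card_not_right_larger[OF assms]
    by (simp add: card_Un_disjoint peaks_def double_descents_def)
qed

lemma card_double_ascents_peaks_des:
  assumes "distinct xs" "xs \<noteq> []"
  shows "card (double_ascents xs) + card (peaks xs) + des xs + 1 = length xs"
proof -
  let ?PK = "peaks xs" and ?VL = "valleys xs" and ?DA = "double_ascents xs"
    and ?DD = "double_descents xs"
  have fin: "finite ?PK" "finite ?VL" "finite ?DA" "finite ?DD"
    by (auto simp: peaks_def valleys_def double_ascents_def double_descents_def)
  have "{z \<in> set xs. left_larger xs z} = ?VL \<union> ?DD" "?VL \<inter> ?DD = {}"
    by (auto simp: valleys_def double_descents_def)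
  then have left: "Suc (des xs) = card ?VL + card ?DD"
    using Suc_des_eq_card_left_larger[OF assms] fin by (simp add: card_Un_disjoint)
  have "set xs = (?PK \<union> ?VL) \<union> (?DA \<union> ?DD)"
    by (auto simp: peaks_def valleys_def double_ascents_def double_descents_def)
  then have "length xs = card ((?PK \<union> ?VL) \<union> (?DA \<union> ?DD))"
    using distinct_card[OF assms(1)] by simp
  also have "\<dots> = card ?PK + card ?VL + (card ?DA + card ?DD)"
  proof -
    have "?PK \<inter> ?VL = {}" "?DA \<inter> ?DD = {}" "(?PK \<union> ?VL) \<inter> (?DA \<union> ?DD) = {}"
      by (auto simp: peaks_def valleys_def double_ascents_def double_descents_def)
    then show ?thesis using fin by (simp add: card_Un_disjoint)
  qed
  finally show ?thesis using left card_double_descents_peaks[OF assms(1)] by simp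
qed

(* Foata-Strehl valley hopping: the double ascent y jumps leftwards over the maximal block B of
   smaller entries preceding it. *)
definition hop :: "'b::linorder list \<Rightarrow> 'b \<Rightarrow> 'b list \<Rightarrow> bool" where
  "hop xs y ys \<longleftrightarrow> (\<exists>A B C. xs = A @ B @ y # C \<and> ys = A @ y # B @ C \<and> B \<noteq> [] \<and>
     (\<forall>b\<in>set B. b < y) \<and> (A = [] \<or> y < last A) \<and> (C = [] \<or> y < hd C))"

lemma adjacent_before_block:
  "B \<noteq> [] \<Longrightarrow> adjacent (A @ y # B @ C) a z \<longleftrightarrow>
     adjacent A a z \<or> (A \<noteq> [] \<and> a = last A \<and> z = y) \<or> (a = y \<and> z = hd B) \<or> adjacent B a z \<or>
     (C \<noteq> [] \<and> a = last B \<and> z = hd C) \<or> adjacent C a z"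
  by (simp add: adjacent_append adjacent_Cons) blast

lemma adjacent_after_block:
  "B \<noteq> [] \<Longrightarrow> adjacent (A @ B @ y # C) a z \<longleftrightarrow>
     adjacent A a z \<or> (A \<noteq> [] \<and> a = last A \<and> z = hd B) \<or> adjacent B a z \<or> (a = last B \<and> z = y) \<or>
     (C \<noteq> [] \<and> a = y \<and> z = hd C) \<or> adjacent C a z"
  by (simp add: adjacent_append adjacent_Cons) blast

context
  fixes A B C :: "'b::linorder list" and y :: 'b
  assumes B: "B \<noteq> []" "\<forall>b\<in>set B. b < y"
    and A: "A = [] \<or> y < last A" and C: "C = [] \<or> y < hd C"
    and dist: "distinct (A @ B @ y # C)"
begin

lemma left_larger_hop:
  assumes "z \<noteq> y"
  shows "left_larger (A @ y # B @ C) z \<longleftrightarrow> left_larger (A @ B @ y # C) z"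
proof -
  consider "z = hd B" | "C \<noteq> [] \<and> z = hd C" | "z \<noteq> hd B" "C = [] \<or> z \<noteq> hd C" by blast
  then show ?thesis
  proof cases
    case 1
    have "hd B \<in> set B" "hd B < y" using B by simp_all
    then have "hd B \<notin> set A" "hd B \<notin> set C" "hd B \<noteq> y" "C = [] \<or> hd B \<noteq> hd C" using dist by auto
    moreover have "\<not> adjacent B a (hd B)" for a using dist by (simp add: not_adjacent_hd)
    ultimately have "left_larger (A @ y # B @ C) z" "left_larger (A @ B @ y # C) z"
      unfolding left_larger_def adjacent_before_block[OF B(1)] adjacent_after_block[OF B(1)]
      using 1 A \<open>hd B < y\<close> by (auto dest: adjacent_in_set)
    then show ?thesis by simp
  next
    case 2
    have "adjacent (A @ y # B @ C) (last B) z" "adjacent (A @ B @ y # C) y z"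
      using 2 by (simp_all add: adjacent_before_block[OF B(1)] adjacent_after_block[OF B(1)])
    moreover have "last B < z" using B C 2 by (metis last_in_set less_trans)
    ultimately have "\<not> left_larger (A @ y # B @ C) z" "\<not> left_larger (A @ B @ y # C) z"
      using C 2 unfolding left_larger_def by (meson less_asym)+
    then show ?thesis by simp
  next
    case 3
    then have "adjacent (A @ y # B @ C) a z \<longleftrightarrow> adjacent (A @ B @ y # C) a z" for a
      unfolding adjacent_before_block[OF B(1)] adjacent_after_block[OF B(1)] using assms by blast
    then show ?thesis by (simp add: left_larger_def)
  qed
qed

lemma right_larger_hop:
  assumes "z \<noteq> y"
  shows "right_larger (A @ y # B @ C) z \<longleftrightarrow> right_larger (A @ B @ y # C) z"
proof -
  consider "A \<noteq> [] \<and> z = last A" | "z = last B" | "A = [] \<or> z \<noteq> last A" "z \<noteq> last B" by blast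
  then show ?thesis
  proof cases
    case 1
    have "adjacent (A @ y # B @ C) z y" "adjacent (A @ B @ y # C) z (hd B)"
      using 1 by (simp_all add: adjacent_before_block[OF B(1)] adjacent_after_block[OF B(1)])
    moreover have "hd B < z" using A B 1 by (metis hd_in_set less_trans)
    ultimately have "\<not> right_larger (A @ y # B @ C) z" "\<not> right_larger (A @ B @ y # C) z"
      using A 1 unfolding right_larger_def by (meson less_asym)+
    then show ?thesis by simp
  next
    case 2
    have "last B \<in> set B" "last B < y" using B by simp_all
    then have "last B \<notin> set A" "last B \<notin> set C" "last B \<noteq> y" using dist by auto
    moreover from this have "A = [] \<or> last B \<noteq> last A" by (metis last_in_set)
    moreover have "\<not> adjacent B (last B) b" for b using dist by (simp add: not_adjacent_last)
    ultimately have "right_larger (A @ y # B @ C) z" "right_larger (A @ B @ y # C) z"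
      unfolding right_larger_def adjacent_before_block[OF B(1)] adjacent_after_block[OF B(1)]
      using 2 C \<open>last B < y\<close> by (auto dest: adjacent_in_set)
    then show ?thesis by simp
  next
    case 3
    then have "adjacent (A @ y # B @ C) z b \<longleftrightarrow> adjacent (A @ B @ y # C) z b" for b
      unfolding adjacent_before_block[OF B(1)] adjacent_after_block[OF B(1)] using assms by blast
    then show ?thesis by (simp add: right_larger_def)
  qed
qed

lemma hop_turns_double_ascent_into_double_descent:
  "left_larger (A @ y # B @ C) y" "\<not> right_larger (A @ y # B @ C) y"
  "\<not> left_larger (A @ B @ y # C) y" "right_larger (A @ B @ y # C) y"
proof -
  have "y \<notin> set A" "y \<notin> set B" "y \<notin> set C" using dist by auto
  then have no_y: "\<not> adjacent A a y" "\<not> adjacent B a y" "\<not> adjacent C a y"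
    "\<not> adjacent A y a" "\<not> adjacent B y a" "\<not> adjacent C y a" for a
    by (auto dest: adjacent_in_set)
  have "hd B < y" "last B < y" using B by simp_all
  then show "left_larger (A @ y # B @ C) y" "\<not> right_larger (A @ y # B @ C) y"
    "\<not> left_larger (A @ B @ y # C) y" "right_larger (A @ B @ y # C) y"
    unfolding left_larger_def right_larger_def
      adjacent_before_block[OF B(1)] adjacent_after_block[OF B(1)]
    using A C no_y by auto
qed

end

lemma split_longest_suffix:
  "\<exists>A B. xs = A @ B \<and> (\<forall>b\<in>set B. P b) \<and> (A = [] \<or> \<not> P (last A)) \<and> (xs \<noteq> [] \<and> P (last xs) \<longrightarrow> B \<noteq> [])"
proof (induction xs rule: rev_induct)
  case (snoc x xs)
  show ?case
  proof (cases "P x")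
    case True
    from snoc obtain A B where "xs = A @ B" "\<forall>b\<in>set B. P b" "A = [] \<or> \<not> P (last A)" by auto
    with True show ?thesis by (intro exI[of _ A] exI[of _ "B @ [x]"]) auto
  next
    case False
    then show ?thesis by (intro exI[of _ "xs @ [x]"] exI[of _ "[]"]) auto
  qed
qed simp

lemma hop_exists:
  assumes "distinct xs" and "y \<in> double_ascents xs"
  shows "\<exists>ys. hop xs y ys"
proof -
  from assms(2) have y: "y \<in> set xs" "\<not> left_larger xs y" "right_larger xs y"
    by (auto simp: double_ascents_def)
  from y(2) obtain a where a: "adjacent xs a y" "\<not> y < a" by (auto simp: left_larger_def)
  have "a < y" using a adjacent_neq[OF assms(1) a(1)] by auto
  from y(1) obtain us C where xs: "xs = us @ y # C" by (meson split_list)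
  have "y \<notin> set us" "y \<notin> set C" using assms(1) xs by auto
  have "adjacent us a y \<or> adjacent (y # C) a y \<or> (us \<noteq> [] \<and> a = last us)"
    using a(1) xs by (simp add: adjacent_append)
  then have "us \<noteq> [] \<and> a = last us"
    using \<open>y \<notin> set us\<close> \<open>y \<notin> set C\<close> \<open>a < y\<close> by (auto simp: adjacent_Cons dest: adjacent_in_set)
  then obtain A B where us: "us = A @ B" "\<forall>b\<in>set B. b < y" "A = [] \<or> \<not> last A < y" "B \<noteq> []"
    using split_longest_suffix[of us "\<lambda>z. z < y"] \<open>a < y\<close> by auto
  have "A = [] \<or> y < last A"
    using us(1,3) \<open>y \<notin> set us\<close> by (metis Un_iff last_in_set linorder_neqE set_append)
  moreover have "C = [] \<or> y < hd C"
    using y(3) xs by (cases C) (auto simp: right_larger_def adjacent_append)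
  ultimately show ?thesis using xs us unfolding hop_def
    by (intro exI[of _ "A @ y # B @ C"] exI[of _ A] exI[of _ B] exI[of _ C]) auto
qed

lemma hop_stats:
  assumes "hop xs y ys" and "distinct xs"
  shows "distinct ys" "y \<in> double_descents ys" "peaks ys = peaks xs" "des ys = Suc (des xs)"
proof -
  obtain A B C where xs: "xs = A @ B @ y # C" and ys: "ys = A @ y # B @ C"
    and B: "B \<noteq> []" "\<forall>b\<in>set B. b < y" and A: "A = [] \<or> y < last A" and C: "C = [] \<or> y < hd C"
    using assms(1) by (auto simp: hop_def)
  note dist = assms(2)[unfolded xs]
  note left = left_larger_hop[OF B A C dist] and right = right_larger_hop[OF B A C dist]
    and y = hop_turns_double_ascent_into_double_descent[OF B A C dist]
  show "distinct ys" using assms(2) xs ys by auto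
  show "y \<in> double_descents ys" using y ys by (simp add: double_descents_def)
  have "z \<in> peaks ys \<longleftrightarrow> z \<in> peaks xs" for z
  proof (cases "z = y")
    case True then show ?thesis using y unfolding xs ys peaks_def by simp
  next
    case False then show ?thesis using left right unfolding xs ys peaks_def by simp
  qed
  then show "peaks ys = peaks xs" by blast
  have "z \<in> {z \<in> set ys. \<not> right_larger ys z}
      \<longleftrightarrow> z \<in> insert y {z \<in> set xs. \<not> right_larger xs z}" for z
  proof (cases "z = y")
    case True then show ?thesis using y unfolding xs ys by simp
  next
    case False then show ?thesis using right unfolding xs ys by simp
  qed
  then have "{z \<in> set ys. \<not> right_larger ys z} = insert y {z \<in> set xs. \<not> right_larger xs z}"
    by blast
  moreover have "y \<notin> {z \<in> set xs. \<not> right_larger xs z}" using y unfolding xs by simp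
  ultimately have "card {z \<in> set ys. \<not> right_larger ys z}
      = Suc (card {z \<in> set xs. \<not> right_larger xs z})"
    by simp
  then show "des ys = Suc (des xs)"
    using des_eq_card_not_right_larger[OF \<open>distinct ys\<close>] des_eq_card_not_right_larger[OF assms(2)]
    by simp
qed

lemma hop_inj:
  assumes "hop xs y zs" and "hop xs' y zs" and "distinct zs"
  shows "xs = xs'"
proof -
  obtain A B C where xs: "xs = A @ B @ y # C" and zs: "zs = A @ y # B @ C"
    and B: "\<forall>b\<in>set B. b < y" and C: "C = [] \<or> y < hd C"
    using assms(1) by (auto simp: hop_def)
  obtain A' B' C' where xs': "xs' = A' @ B' @ y # C'" and zs': "zs = A' @ y # B' @ C'"
    and B': "\<forall>b\<in>set B'. b < y" and C': "C' = [] \<or> y < hd C'"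
    using assms(2) by (auto simp: hop_def)
  have "y \<notin> set A" "y \<notin> set (B @ C)" using assms(3) unfolding zs by simp_all
  moreover have "y \<notin> set A'" using assms(3) unfolding zs' by simp
  ultimately have A: "A = A'" and BC: "B @ C = B' @ C'" using zs zs' append_Cons_eq_iff by metis+
  have block: "takeWhile (\<lambda>z. z < y) (X @ Y) = X" if "\<forall>b\<in>set X. b < y" "Y = [] \<or> y < hd Y" for X Y
  proof (cases Y)
    case (Cons a l)
    then have "\<not> a < y" using that(2) by (metis less_asym list.distinct(1) list.sel(1))
    then show ?thesis using that(1) Cons by simp
  qed (use that in simp)
  have "B = B'" using block[OF B C] block[OF B' C'] BC by metis
  moreover from this have "C = C'" using BC by simp
  ultimately show ?thesis using xs xs' A by simp
qed

definition ascent_swap_closed :: "'b::linorder list set \<Rightarrow> bool" where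
  "ascent_swap_closed V \<longleftrightarrow> (\<forall>us a b vs. us @ a # b # vs \<in> V \<longrightarrow> a < b \<longrightarrow> us @ b # a # vs \<in> V)"

lemma hop_closed:
  assumes "ascent_swap_closed V" and "xs \<in> V" and "hop xs y ys"
  shows "ys \<in> V"
proof -
  have "A @ y # B @ C \<in> V" if "\<forall>b\<in>set B. b < y" "A @ B @ y # C \<in> V" for A B C
    using that
  proof (induction B arbitrary: A)
    case (Cons b B)
    then have "A @ b # y # (B @ C) \<in> V" using Cons.IH[of "A @ [b]"] by simp
    then show ?case using assms(1) Cons.prems(1) unfolding ascent_swap_closed_def by fastforce
  qed simp
  then show ?thesis using assms(2,3) unfolding hop_def by blast
qed

definition peak_des_class :: "'b::linorder list set \<Rightarrow> nat \<Rightarrow> nat \<Rightarrow> 'b list set" where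
  "peak_des_class V k d = {xs \<in> V. card (peaks xs) = k \<and> des xs = d}"

lemma peak_des_class_nonempty:
  assumes "\<forall>xs\<in>V. distinct xs \<and> length xs = n" and "0 < n" and "peak_des_class V k d \<noteq> {}"
  shows "k \<le> d" "k + d < n"
proof -
  obtain xs where "xs \<in> V" "card (peaks xs) = k" "des xs = d"
    using assms(3) by (auto simp: peak_des_class_def)
  then show "k \<le> d" "k + d < n"
    using assms(1,2) card_double_descents_peaks[of xs] card_double_ascents_peaks_des[of xs] by auto
qed

lemma card_double_ascents:
  "distinct xs \<Longrightarrow> xs \<noteq> [] \<Longrightarrow> card (double_ascents xs) = length xs - 1 - card (peaks xs) - des xs"
  using card_double_ascents_peaks_des by fastforce

lemma card_double_descents: "distinct xs \<Longrightarrow> card (double_descents xs) = des xs - card (peaks xs)"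
  using card_double_descents_peaks by fastforce

lemma card_hop_pairs_le:
  fixes V :: "'b::linorder list set"
  assumes fin: "finite V" and V: "\<forall>xs\<in>V. distinct xs" and closed: "ascent_swap_closed V"
  shows "card (Sigma (peak_des_class V k d) double_ascents)
    \<le> card (Sigma (peak_des_class V k (Suc d)) double_descents)"
proof -
  let ?X = "Sigma (peak_des_class V k d) double_ascents"
  let ?Y = "Sigma (peak_des_class V k (Suc d)) double_descents"
  define f :: "'b list \<times> 'b \<Rightarrow> 'b list \<times> 'b" where "f = (\<lambda>(xs, y). (SOME ys. hop xs y ys, y))"
  have f: "hop xs y (fst (f (xs, y)))" "snd (f (xs, y)) = y" if "(xs, y) \<in> ?X" for xs y
  proof -
    from that have "distinct xs" "y \<in> double_ascents xs" using V by (auto simp: peak_des_class_def)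
    then have "\<exists>ys. hop xs y ys" by (rule hop_exists)
    then show "hop xs y (fst (f (xs, y)))" "snd (f (xs, y)) = y" unfolding f_def
      by (auto intro: someI_ex)
  qed
  have "inj_on f ?X"
  proof (rule inj_onI)
    fix p q assume p: "p \<in> ?X" and q: "q \<in> ?X" and eq: "f p = f q"
    obtain xs y xs' y' where pq: "p = (xs, y)" "q = (xs', y')" by (cases p, cases q)
    have "y = y'" using f(2)[of xs y] f(2)[of xs' y'] p q eq pq by metis
    have "distinct xs" using p pq V by (auto simp: peak_des_class_def)
    moreover have "hop xs y (fst (f p))" using f(1) p pq by simp
    moreover have "hop xs' y (fst (f p))" using f(1) q pq eq \<open>y = y'\<close> by simp
    ultimately have "xs = xs'" using hop_inj hop_stats(1) by metis
    then show "p = q" using pq \<open>y = y'\<close> by simp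
  qed
  moreover have "f ` ?X \<subseteq> ?Y"
  proof (rule image_subsetI)
    fix p assume "p \<in> ?X"
    then obtain xs y where p: "p = (xs, y)" "(xs, y) \<in> ?X" by (cases p) auto
    then have xs: "xs \<in> V" "distinct xs" "card (peaks xs) = k" "des xs = d"
      using V by (auto simp: peak_des_class_def)
    note stats = hop_stats[OF f(1)[OF p(2)] xs(2)]
    have "fst (f p) \<in> peak_des_class V k (Suc d)"
      using hop_closed[OF closed xs(1) f(1)[OF p(2)]] stats xs p(1) by (simp add: peak_des_class_def)
    then show "f p \<in> ?Y" using stats(2) f(2)[OF p(2)] p(1) by (metis SigmaI prod.collapse)
  qed
  moreover have "finite ?Y" using fin by (simp add: peak_des_class_def double_descents_def)
  ultimately show ?thesis by (rule card_inj_on_le)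
qed

lemma card_peak_des_class_Suc:
  fixes V :: "'b::linorder list set"
  assumes fin: "finite V" and V: "\<forall>xs\<in>V. distinct xs \<and> length xs = n" and "0 < n"
    and closed: "ascent_swap_closed V"
  shows "card (peak_des_class V k d) * (n - 1 - k - d)
      \<le> card (peak_des_class V k (Suc d)) * (Suc d - k)"
proof -
  have fin_class: "finite (peak_des_class V k d')" for d'
    using fin by (simp add: peak_des_class_def)
  have "card (peak_des_class V k d) * (n - 1 - k - d) = (\<Sum>xs\<in>peak_des_class V k d. n - 1 - k - d)"
    by simp
  also have "\<dots> = (\<Sum>xs\<in>peak_des_class V k d. card (double_ascents xs))"
    using V \<open>0 < n\<close> by (intro sum.cong) (auto simp: peak_des_class_def card_double_ascents)
  also have "\<dots> = card (Sigma (peak_des_class V k d) double_ascents)"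
    using fin_class by (simp add: double_ascents_def)
  also have "\<dots> \<le> card (Sigma (peak_des_class V k (Suc d)) double_descents)"
    using card_hop_pairs_le fin V closed by blast
  also have "\<dots> = (\<Sum>xs\<in>peak_des_class V k (Suc d). card (double_descents xs))"
    using fin_class by (simp add: double_descents_def)
  also have "\<dots> = (\<Sum>xs\<in>peak_des_class V k (Suc d). Suc d - k)"
    using V by (intro sum.cong) (auto simp: peak_des_class_def card_double_descents)
  also have "\<dots> = card (peak_des_class V k (Suc d)) * (Suc d - k)"
    by simp
  finally show ?thesis .
qed

lemma binomial_ratio_mono:
  fixes b :: "nat \<Rightarrow> nat"
  assumes step: "\<And>e. b e * (m - e) \<le> b (Suc e) * Suc e" and "e \<le> e'" and "e' \<le> m"
  shows "b e * (m choose e') \<le> b e' * (m choose e)"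
  using assms(2,3)
proof (induction e' rule: dec_induct)
  case (step e')
  have "b e * (m choose Suc e') * Suc e' = b e * (m choose e') * (m - e')"
    by (metis binomial_absorb_comp binomial_absorption mult.assoc mult.commute)
  also have "\<dots> \<le> b e' * (m choose e) * (m - e')"
    using step by (intro mult_right_mono) auto
  also have "\<dots> = b e' * (m - e') * (m choose e)" by (simp add: algebra_simps)
  also have "\<dots> \<le> b (Suc e') * Suc e' * (m choose e)"
    using assms(1) by (intro mult_right_mono) auto
  finally have "b e * (m choose Suc e') * Suc e' \<le> b (Suc e') * (m choose e) * Suc e'"
    by (simp only: ac_simps)
  then show ?case by (meson mult_le_cancel2 zero_less_Suc)
qed simp

lemma binomial_ratio_le_mirror:
  fixes b :: "nat \<Rightarrow> nat"
  assumes step: "\<And>e. b e * (m - e) \<le> b (Suc e) * Suc e" and "e \<le> m - e"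
  shows "b e \<le> b (m - e)"
proof (cases "e \<le> m")
  case True
  have "b e * (m choose (m - e)) \<le> b (m - e) * (m choose e)"
    using binomial_ratio_mono[OF step assms(2)] by simp
  moreover have "m choose (m - e) = m choose e" using True by (rule binomial_symmetric[symmetric])
  moreover have "0 < m choose e" using True by simp
  ultimately show ?thesis by simp
qed (use assms(2) in simp)

lemma card_peak_des_class_mono:
  fixes V :: "'b::linorder list set"
  assumes "finite V" and V: "\<forall>xs\<in>V. distinct xs \<and> length xs = n" and "ascent_swap_closed V"
    and "2 * Suc d < n"
  shows "card (peak_des_class V k d) \<le> card (peak_des_class V k (Suc d))"
proof (cases "peak_des_class V k d = {}")
  case False
  have "0 < n" using assms(4) by simp
  then have "k \<le> d" using peak_des_class_nonempty[OF V _ False] by simp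
  have "card (peak_des_class V k d) * (Suc d - k) \<le> card (peak_des_class V k d) * (n - 1 - k - d)"
    using assms(4) by (intro mult_left_mono) auto
  also have "\<dots> \<le> card (peak_des_class V k (Suc d)) * (Suc d - k)"
    using card_peak_des_class_Suc[OF assms(1,2) \<open>0 < n\<close> assms(3)] .
  finally show ?thesis using \<open>k \<le> d\<close> by simp
qed simp

lemma card_peak_des_class_le_mirror:
  fixes V :: "'b::linorder list set"
  assumes "finite V" and V: "\<forall>xs\<in>V. distinct xs \<and> length xs = n" and "ascent_swap_closed V"
    and "2 * d < n"
  shows "card (peak_des_class V k d) \<le> card (peak_des_class V k (n - 1 - d))"
proof (cases "peak_des_class V k d = {}")
  case False
  have "0 < n" using assms(4) by simp
  then have "k \<le> d" using peak_des_class_nonempty[OF V _ False] by simp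
  define b where "b e = card (peak_des_class V k (k + e))" for e
  have "b e * (n - 1 - 2 * k - e) \<le> b (Suc e) * Suc e" for e
  proof -
    have "b e * (n - 1 - 2 * k - e) = card (peak_des_class V k (k + e)) * (n - 1 - k - (k + e))"
      by (simp add: b_def mult_2 add.assoc)
    also have "\<dots> \<le> card (peak_des_class V k (Suc (k + e))) * (Suc (k + e) - k)"
      by (rule card_peak_des_class_Suc[OF assms(1,2) \<open>0 < n\<close> assms(3)])
    also have "\<dots> = b (Suc e) * Suc e" by (simp add: b_def)
    finally show ?thesis .
  qed
  moreover have "d - k \<le> n - 1 - 2 * k - (d - k)" using \<open>k \<le> d\<close> assms(4) by simp
  ultimately have "b (d - k) \<le> b (n - 1 - 2 * k - (d - k))" by (rule binomial_ratio_le_mirror)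
  moreover have "k + (d - k) = d" "k + (n - 1 - 2 * k - (d - k)) = n - 1 - d"
    using \<open>k \<le> d\<close> assms(4) by simp_all
  ultimately show ?thesis unfolding b_def by metis
qed simp

lemma card_des_eq_sum_peak_des_class:
  assumes "finite V" and "\<forall>xs\<in>V. length xs = n"
  shows "card {xs \<in> V. des xs = d} = (\<Sum>k\<le>n. card (peak_des_class V k d))"
proof -
  have "card (peaks xs) \<le> n" if "xs \<in> V" for xs
  proof -
    have "card (peaks xs) \<le> card (set xs)" by (rule card_mono) (auto simp: peaks_def)
    also have "\<dots> \<le> n" using assms(2) that card_length by metis
    finally show ?thesis .
  qed
  then have "(\<Sum>k\<le>n. card {xs \<in> {xs \<in> V. des xs = d}. card (peaks xs) = k}) =
      card {xs \<in> V. des xs = d}"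
    using sum.group[of "{xs \<in> V. des xs = d}" "{..n}" "\<lambda>xs. card (peaks xs)" "\<lambda>_. 1 :: nat"]
      assms(1)
    by auto
  moreover have "{xs \<in> {xs \<in> V. des xs = d}. card (peaks xs) = k} = peak_des_class V k d" for k
    by (auto simp: peak_des_class_def)
  ultimately show ?thesis by simp
qed

theorem card_des_mono_if_ascent_swap_closed:
  fixes V :: "'b::linorder list set"
  assumes "finite V" and "\<forall>xs\<in>V. distinct xs \<and> length xs = n" and "ascent_swap_closed V"
    and "2 * Suc d < n"
  shows "card {xs \<in> V. des xs = d} \<le> card {xs \<in> V. des xs = Suc d}"
proof -
  have len: "\<forall>xs\<in>V. length xs = n" using assms(2) by simp
  show ?thesis unfolding card_des_eq_sum_peak_des_class[OF assms(1) len]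
    by (intro sum_mono card_peak_des_class_mono[OF assms])
qed

theorem card_des_le_mirror_if_ascent_swap_closed:
  fixes V :: "'b::linorder list set"
  assumes "finite V" and "\<forall>xs\<in>V. distinct xs \<and> length xs = n" and "ascent_swap_closed V"
    and "2 * d < n"
  shows "card {xs \<in> V. des xs = d} \<le> card {xs \<in> V. des xs = n - 1 - d}"
proof -
  have len: "\<forall>xs\<in>V. length xs = n" using assms(2) by simp
  show ?thesis unfolding card_des_eq_sum_peak_des_class[OF assms(1) len]
    by (intro sum_mono card_peak_des_class_le_mirror[OF assms])
qed

section \<open>Geometric lattices\<close>

lemma covers_less: "covers x y \<Longrightarrow> x < y"
  by (simp add: covers_def)

lemma covers_exists_below:
  fixes x y :: "'a::{finite,order}"
  assumes "x < y"
  shows "\<exists>z. covers x z \<and> z \<le> y"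
proof -
  have "finite {z. x < z \<and> z \<le> y}" "{z. x < z \<and> z \<le> y} \<noteq> {}" using assms by auto
  then obtain m where m: "m \<in> {z. x < z \<and> z \<le> y}" "\<forall>z\<in>{z. x < z \<and> z \<le> y}. z \<le> m \<longrightarrow> m = z"
    using finite_has_minimal by blast
  have "covers x m" unfolding covers_def
  proof (intro conjI notI)
    show "x < m" using m by simp
    assume "\<exists>z. x < z \<and> z < m"
    then obtain z where "x < z" "z < m" by blast
    then show False using m by (metis less_le mem_Collect_eq order.trans)
  qed
  then show ?thesis using m by auto
qed

lemma inf_atom_eq_bot:
  assumes "a \<in> atoms" and "\<not> a \<le> z"
  shows "inf z a = bot"
proof -
  have "inf z a < a" using assms(2) by (metis inf.absorb_iff2 inf_le2 less_le)
  then show ?thesis using assms(1) unfolding atoms_def covers_def using bot.not_eq_extremum by blast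
qed

definition new_atoms :: "'a::bounded_lattice \<Rightarrow> 'a \<Rightarrow> 'a set" where
  "new_atoms z w = {a \<in> atoms. a \<le> w \<and> \<not> a \<le> z}"

lemma new_atoms_mono_right: "w \<le> w' \<Longrightarrow> new_atoms z w \<subseteq> new_atoms z w'"
  by (auto simp: new_atoms_def)

lemma new_atoms_antimono_left: "z' \<le> z \<Longrightarrow> a \<in> new_atoms z w \<Longrightarrow> a \<in> new_atoms z' w"
  by (auto simp: new_atoms_def intro: order_trans)

lemma covers_eq_sup_new_atom:
  assumes "covers z w" and "a \<in> new_atoms z w"
  shows "w = sup z a"
proof -
  have "sup z a \<le> w" using assms by (auto simp: new_atoms_def covers_def less_imp_le)
  moreover have "z < sup z a" using assms(2) by (simp add: new_atoms_def less_le) (metis sup.orderI)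
  ultimately show ?thesis using assms(1) unfolding covers_def
    by (metis order.not_eq_order_implies_strict)
qed

lemma exists_step_between:
  assumes "k < p" and "P p" and "\<not> P k"
  shows "\<exists>q. k \<le> q \<and> q < p \<and> \<not> P q \<and> P (Suc q)"
  using assms
proof (induction p)
  case (Suc p)
  show ?case
  proof (cases "P p")
    case True
    then have "k < p" using Suc.prems by (metis less_SucE)
    then show ?thesis using Suc.IH True Suc.prems(3) by (meson less_SucI)
  next
    case False
    then show ?thesis using Suc.prems by (intro exI[of _ p]) auto
  qed
qed simp

lemma is_chain_has_least:
  fixes A :: "'b::order set"
  assumes "finite A" and "A \<noteq> {}" and "is_chain A"
  shows "\<exists>m\<in>A. \<forall>t\<in>A. m \<le> t"
proof -
  obtain m where "m \<in> A" "\<forall>t\<in>A. t \<le> m \<longrightarrow> m = t" using finite_has_minimal[OF assms(1,2)] by blast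
  then show ?thesis using assms(3) unfolding is_chain_def by metis
qed

locale geometric =
  fixes \<rho> :: "'a::{finite,bounded_lattice} \<Rightarrow> nat"
  assumes geometric: "geometric_lattice \<rho>"
begin

lemma rank_bot: "\<rho> bot = 0"
  and rank_covers: "covers x y \<Longrightarrow> \<rho> y = \<rho> x + 1"
  and rank_semimodular: "\<rho> (sup x y) + \<rho> (inf x y) \<le> \<rho> x + \<rho> y"
  and atomic: "\<exists>A. A \<subseteq> atoms \<and> finite A \<and> x = Sup_fin (insert bot A)"
  using geometric by (auto simp: geometric_lattice_def graded_rank_def atomic_lattice_def)

lemma rank_strict_mono: "(x::'a) < y \<Longrightarrow> \<rho> x < \<rho> y"
proof (induction "card {z. x < z \<and> z \<le> y}" arbitrary: x rule: less_induct)
  case less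
  obtain z where z: "covers x z" "z \<le> y" using covers_exists_below[OF less.prems] by blast
  show ?case
  proof (cases "z = y")
    case False
    then have "z < y" using z by simp
    have "{w. z < w \<and> w \<le> y} \<subseteq> {w. x < w \<and> w \<le> y}"
      using covers_less[OF z(1)] by (auto intro: less_trans)
    moreover have "z \<in> {w. x < w \<and> w \<le> y}" "z \<notin> {w. z < w \<and> w \<le> y}"
      using covers_less[OF z(1)] \<open>z < y\<close> by auto
    ultimately have "card {w. z < w \<and> w \<le> y} < card {w. x < w \<and> w \<le> y}"
      by (intro psubset_card_mono) auto
    then have "\<rho> z < \<rho> y" using \<open>z < y\<close> by (rule less.hyps)
    then show ?thesis using rank_covers[OF z(1)] by simp
  qed (use rank_covers[OF z(1)] in simp)
qed

lemma eq_if_le_rank_eq: "x \<le> y \<Longrightarrow> \<rho> x = \<rho> y \<Longrightarrow> x = y"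
  using rank_strict_mono by (metis less_le)

lemma covers_if_rank_Suc: "x < y \<Longrightarrow> \<rho> y = Suc (\<rho> x) \<Longrightarrow> covers x y"
  unfolding covers_def using rank_strict_mono by (metis Suc_le_eq leD)

lemma rank_atom: "(a::'a) \<in> atoms \<Longrightarrow> \<rho> a = 1"
  using rank_covers rank_bot by (simp add: atoms_def)

lemma covers_sup_atom:
  fixes a z :: 'a
  assumes "a \<in> atoms" and "\<not> a \<le> z"
  shows "covers z (sup z a)"
proof -
  have "\<rho> (sup z a) \<le> Suc (\<rho> z)"
    using rank_semimodular[of z a] inf_atom_eq_bot[OF assms] rank_atom[OF assms(1)] rank_bot by simp
  moreover have "z < sup z a" using assms(2) by (simp add: less_le) (metis sup.orderI)
  ultimately show ?thesis using rank_strict_mono[of z "sup z a"] covers_if_rank_Suc by simp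
qed

lemma exists_atom_le_not_le:
  fixes x y :: 'a
  assumes "x < y"
  shows "\<exists>a\<in>atoms. a \<le> y \<and> \<not> a \<le> x"
proof (rule ccontr)
  assume none: "\<not> ?thesis"
  obtain A where A: "A \<subseteq> atoms" "finite A" "y = Sup_fin (insert bot A)" using atomic by blast
  then have "\<forall>a\<in>A. a \<le> y" by (metis Sup_fin.coboundedI finite_insert insertCI)
  then have "\<forall>a\<in>insert bot A. a \<le> x" using none A(1) by auto
  then have "y \<le> x" using A by (simp add: Sup_fin.bounded_iff)
  then show False using assms by simp
qed

lemma inf_covers_covers:
  fixes z u v :: 'a
  assumes u: "covers z u" and v: "covers z v" and "u \<noteq> v"
  shows "inf u v = z"
proof -
  have "inf u v \<noteq> u"
  proof
    assume "inf u v = u"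
    then have "u \<le> v" by (metis inf.absorb_iff1)
    moreover have "\<rho> u = \<rho> v" using rank_covers[OF u] rank_covers[OF v] by simp
    ultimately show False using \<open>u \<noteq> v\<close> eq_if_le_rank_eq by blast
  qed
  then have "inf u v < u" by (simp add: less_le)
  moreover have "z \<le> inf u v" using covers_less[OF u] covers_less[OF v] by (simp add: less_imp_le)
  ultimately show ?thesis using u unfolding covers_def by (metis order.not_eq_order_implies_strict)
qed

lemma covers_diamond:
  fixes x0 x1 x2 a :: 'a
  assumes c01: "covers x0 x1" and c12: "covers x1 x2"
    and a: "a \<in> atoms" "a \<le> x2" "\<not> a \<le> x1"
  shows "covers x0 (sup x0 a)" "covers (sup x0 a) x2" "inf x1 (sup x0 a) = x0"
proof -
  have "\<not> a \<le> x0" using a(3) covers_less[OF c01] by (metis less_le order_trans)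
  then show c0: "covers x0 (sup x0 a)" by (rule covers_sup_atom[OF a(1)])
  have "sup x0 a \<le> x2" using a(2) covers_less[OF c01] covers_less[OF c12] by simp
  moreover have "\<rho> x2 = Suc (\<rho> (sup x0 a))"
    using rank_covers[OF c01] rank_covers[OF c12] rank_covers[OF c0] by simp
  ultimately show "covers (sup x0 a) x2" by (intro covers_if_rank_Suc) (auto simp: less_le)
  have "x1 \<noteq> sup x0 a" using a(3) by auto
  then show "inf x1 (sup x0 a) = x0" by (rule inf_covers_covers[OF c01 c0])
qed

end

section \<open>The minimal labelling\<close>

(* idx fixes a total order of the atoms; a cover is labelled by its least new atom
   (Bjoerner's minimal labelling). *)
locale minimal_labelling = geometric \<rho> for \<rho> :: "'a::{finite,bounded_lattice} \<Rightarrow> nat" +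
  fixes idx :: "'a \<Rightarrow> nat" and r :: nat
  assumes inj_idx: "inj idx" and rank_top: "\<rho> top = r + 1"
begin

definition label :: "'a \<Rightarrow> 'a \<Rightarrow> nat" where
  "label z w = Min (idx ` new_atoms z w)"

definition label_atom :: "'a \<Rightarrow> 'a \<Rightarrow> 'a" where
  "label_atom z w = inv idx (label z w)"

lemma label_atom_minimal:
  assumes "z < w"
  shows "label_atom z w \<in> new_atoms z w" "idx (label_atom z w) = label z w"
    "b \<in> new_atoms z w \<Longrightarrow> label z w \<le> idx b"
proof -
  have "new_atoms z w \<noteq> {}" using exists_atom_le_not_le[OF assms] by (auto simp: new_atoms_def)
  then have "label z w \<in> idx ` new_atoms z w" unfolding label_def by (intro Min_in) auto
  then obtain a where a: "a \<in> new_atoms z w" "idx a = label z w" by auto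
  moreover have "label_atom z w = a" unfolding label_atom_def using a(2) inj_idx by (metis inv_f_f)
  ultimately show "label_atom z w \<in> new_atoms z w" "idx (label_atom z w) = label z w" by auto
  show "b \<in> new_atoms z w \<Longrightarrow> label z w \<le> idx b" unfolding label_def by (intro Min_le) auto
qed

lemma label_eqI:
  assumes "a \<in> new_atoms z w" and "\<And>b. b \<in> new_atoms z w \<Longrightarrow> idx a \<le> idx b"
  shows "label z w = idx a" and "label_atom z w = a"
proof -
  show l: "label z w = idx a" unfolding label_def using assms by (intro Min_eqI) auto
  show "label_atom z w = a" unfolding label_atom_def l using inj_idx by (metis inv_f_f)
qed

lemma label_atom_sup_label_atom:
  assumes "z < t"
  shows "label_atom z (sup z (label_atom z t)) = label_atom z t"
proof (rule label_eqI(2))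
  show "label_atom z t \<in> new_atoms z (sup z (label_atom z t))"
    using label_atom_minimal(1)[OF assms] by (simp add: new_atoms_def)
  fix b assume "b \<in> new_atoms z (sup z (label_atom z t))"
  moreover have "sup z (label_atom z t) \<le> t"
    using label_atom_minimal(1)[OF assms] assms by (simp add: new_atoms_def less_imp_le)
  ultimately have "b \<in> new_atoms z t" using new_atoms_mono_right by blast
  then show "idx (label_atom z t) \<le> idx b" using label_atom_minimal[OF assms] by simp
qed

context
  fixes x0 x1 x2 :: 'a
  assumes c01: "covers x0 x1" and c12: "covers x1 x2"
begin

lemma covers_label_diamond:
  "covers x0 (sup x0 (label_atom x1 x2))" "covers (sup x0 (label_atom x1 x2)) x2"
  "inf x1 (sup x0 (label_atom x1 x2)) = x0"
  using covers_diamond[OF c01 c12] label_atom_minimal(1)[OF covers_less[OF c12]]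
  by (simp_all add: new_atoms_def)

lemma label_lower_diamond: "label x0 (sup x0 (label_atom x1 x2)) = label x1 x2"
proof -
  let ?\<beta> = "label_atom x1 x2"
  have \<beta>: "?\<beta> \<in> new_atoms x1 x2" "idx ?\<beta> = label x1 x2"
    using label_atom_minimal[OF covers_less[OF c12]] by simp_all
  have "label x0 (sup x0 ?\<beta>) = idx ?\<beta>"
  proof (rule label_eqI(1))
    have "\<not> ?\<beta> \<le> x0"
      using \<beta>(1) covers_less[OF c01] unfolding new_atoms_def
      by (metis less_le mem_Collect_eq order_trans)
    then show "?\<beta> \<in> new_atoms x0 (sup x0 ?\<beta>)" using \<beta>(1) by (simp add: new_atoms_def)
    fix g assume g: "g \<in> new_atoms x0 (sup x0 ?\<beta>)"
    then have "\<not> g \<le> x1" using covers_label_diamond(3) unfolding new_atoms_def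
      by (metis le_inf_iff mem_Collect_eq)
    then have "g \<in> new_atoms x1 x2"
      using g covers_less[OF covers_label_diamond(2)]
      by (auto simp: new_atoms_def intro: order_trans)
    then show "idx ?\<beta> \<le> idx g" using label_atom_minimal(3)[OF covers_less[OF c12]] \<beta>(2) by simp
  qed
  then show ?thesis using \<beta>(2) by simp
qed

lemma label_upper_diamond:
  assumes "label x0 x1 < label x1 x2"
  shows "label (sup x0 (label_atom x1 x2)) x2 = label x0 x1"
proof -
  let ?x' = "sup x0 (label_atom x1 x2)" and ?\<alpha> = "label_atom x0 x1"
  have \<alpha>: "?\<alpha> \<in> new_atoms x0 x1" "idx ?\<alpha> = label x0 x1"
    using label_atom_minimal[OF covers_less[OF c01]] by simp_all
  have "label ?x' x2 = idx ?\<alpha>"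
  proof (rule label_eqI(1))
    have "\<not> ?\<alpha> \<le> ?x'" using \<alpha>(1) covers_label_diamond(3) unfolding new_atoms_def
      by (metis le_inf_iff mem_Collect_eq)
    then show "?\<alpha> \<in> new_atoms ?x' x2"
      using \<alpha>(1) covers_less[OF c12] by (auto simp: new_atoms_def intro: order_trans)
    fix g assume g: "g \<in> new_atoms ?x' x2"
    have "\<not> g \<le> x0"
      using g covers_less[OF covers_label_diamond(1)]
      by (auto simp: new_atoms_def intro: order_trans)
    show "idx ?\<alpha> \<le> idx g"
    proof (cases "g \<le> x1")
      case True
      then have "g \<in> new_atoms x0 x1" using g \<open>\<not> g \<le> x0\<close> by (simp add: new_atoms_def)
      then show ?thesis using label_atom_minimal(3)[OF covers_less[OF c01]] \<alpha>(2) by simp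
    next
      case False
      then have "g \<in> new_atoms x1 x2" using g by (simp add: new_atoms_def)
      then show ?thesis using label_atom_minimal(3)[OF covers_less[OF c12]] \<alpha>(2) assms by fastforce
    qed
  qed
  then show ?thesis using \<alpha>(2) by simp
qed

end

lemma label_swap:
  assumes "covers x0 x1" and "covers x1 x2" and "label x0 x1 < label x1 x2"
  shows "\<exists>x'. covers x0 x' \<and> covers x' x2 \<and> label x0 x' = label x1 x2 \<and> label x' x2 = label x0 x1"
  using covers_label_diamond[OF assms(1,2)] label_lower_diamond[OF assms(1,2)]
    label_upper_diamond[OF assms] by blast

definition maximal_chains :: "'a list set" where
  "maximal_chains = {c. length c = r + 2 \<and> c ! 0 = bot \<and> c ! (r + 1) = top \<and>
     (\<forall>k\<le>r. covers (c ! k) (c ! Suc k))}"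

lemma finite_maximal_chains: "finite maximal_chains"
proof -
  have "maximal_chains \<subseteq> {xs. set xs \<subseteq> UNIV \<and> length xs = r + 2}" by (auto simp: maximal_chains_def)
  moreover have "finite {xs. set xs \<subseteq> (UNIV :: 'a set) \<and> length xs = r + 2}"
    by (rule finite_lists_length_eq) simp
  ultimately show ?thesis by (rule finite_subset)
qed

lemma maximal_chain_covers: "c \<in> maximal_chains \<Longrightarrow> k \<le> r \<Longrightarrow> covers (c ! k) (c ! Suc k)"
  by (simp add: maximal_chains_def)

lemma rank_maximal_chain: "c \<in> maximal_chains \<Longrightarrow> k \<le> r + 1 \<Longrightarrow> \<rho> (c ! k) = k"
proof (induction k)
  case (Suc k)
  then show ?case using rank_covers[OF maximal_chain_covers[OF Suc.prems(1)]] by simp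
qed (simp add: maximal_chains_def rank_bot)

lemma maximal_chain_mono:
  assumes c: "c \<in> maximal_chains" and "i \<le> j" and "j \<le> r + 1"
  shows "c ! i \<le> c ! j"
  using assms(2,3)
proof (induction j rule: dec_induct)
  case (step j)
  then show ?case using covers_less[OF maximal_chain_covers[OF c, of j]] by simp
qed simp

lemma maximal_chain_Suc_eq_sup:
  "c \<in> maximal_chains \<Longrightarrow> k \<le> r \<Longrightarrow> c ! Suc k = sup (c ! k) (label_atom (c ! k) (c ! Suc k))"
  using maximal_chain_covers covers_eq_sup_new_atom label_atom_minimal(1) covers_less by blast

lemma maximal_chain_eqI:
  assumes c: "c \<in> maximal_chains" and c': "c' \<in> maximal_chains"
    and step: "\<And>k. k \<le> r \<Longrightarrow> c ! k = c' ! k \<Longrightarrow>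
      label_atom (c ! k) (c ! Suc k) = label_atom (c' ! k) (c' ! Suc k)"
  shows "c = c'"
proof -
  have "c ! k = c' ! k" if "k \<le> r + 1" for k
    using that
  proof (induction k)
    case (Suc k)
    then have "k \<le> r" "c ! k = c' ! k" by simp_all
    then show ?case
      using step maximal_chain_Suc_eq_sup[OF c \<open>k \<le> r\<close>] maximal_chain_Suc_eq_sup[OF c' \<open>k \<le> r\<close>]
      by simp
  qed (use c c' in \<open>simp add: maximal_chains_def\<close>)
  moreover have "length c = r + 2" "length c' = r + 2" using c c'
    by (simp_all add: maximal_chains_def)
  ultimately show ?thesis by (intro nth_equalityI) auto
qed

definition label_seq :: "'a list \<Rightarrow> nat list" where
  "label_seq c = map (\<lambda>k. label (c ! k) (c ! Suc k)) [0..<r + 1]"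

lemma nth_label_seq: "k \<le> r \<Longrightarrow> label_seq c ! k = label (c ! k) (c ! Suc k)"
  by (simp add: label_seq_def nth_append less_Suc_eq_le del: upt_Suc)

lemma length_label_seq: "length (label_seq c) = r + 1"
  by (simp add: label_seq_def)

(* Labels are indices of atoms; an atom below c_(i+1) cannot be new at a later step. *)
lemma distinct_label_seq:
  assumes c: "c \<in> maximal_chains"
  shows "distinct (label_seq c)"
proof -
  have "label_seq c ! i \<noteq> label_seq c ! j" if "i < j" "j \<le> r" for i j
  proof -
    let ?a = "label_atom (c ! i) (c ! Suc i)" and ?b = "label_atom (c ! j) (c ! Suc j)"
    have "?a \<le> c ! Suc i"
      using label_atom_minimal(1)[OF covers_less[OF maximal_chain_covers[OF c]]] that
      by (simp add: new_atoms_def)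
    also have "\<dots> \<le> c ! j" using maximal_chain_mono[OF c, of "Suc i" j] that by simp
    finally have "?a \<noteq> ?b"
      using label_atom_minimal(1)[OF covers_less[OF maximal_chain_covers[OF c]]] that
      by (auto simp: new_atoms_def)
    then have "idx ?a \<noteq> idx ?b" using inj_idx by (meson injD)
    then show ?thesis
      using label_atom_minimal(2)[OF covers_less[OF maximal_chain_covers[OF c]]] that
      by (simp add: nth_label_seq)
  qed
  then show ?thesis unfolding distinct_conv_nth length_label_seq
    by (metis linorder_neqE_nat less_Suc_eq_le Suc_eq_plus1)
qed

lemma inj_on_label_seq: "inj_on label_seq maximal_chains"
proof (rule inj_onI)
  fix c c' assume c: "c \<in> maximal_chains" and c': "c' \<in> maximal_chains"
    and eq: "label_seq c = label_seq c'"
  show "c = c'"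
  proof (rule maximal_chain_eqI[OF c c'])
    fix k assume "k \<le> r"
    then have "label (c ! k) (c ! Suc k) = label (c' ! k) (c' ! Suc k)" using eq
      by (metis nth_label_seq)
    then show "label_atom (c ! k) (c ! Suc k) = label_atom (c' ! k) (c' ! Suc k)"
      by (simp add: label_atom_def)
  qed
qed

lemma label_seq_swap:
  assumes c: "c \<in> maximal_chains" and l: "label_seq c = us @ a # b # vs" and "a < b"
  shows "\<exists>c'\<in>maximal_chains. label_seq c' = us @ b # a # vs"
proof -
  define j where "j = length us"
  have jr: "Suc j \<le> r" using l length_label_seq[of c] by (simp add: j_def)
  have la: "label (c ! j) (c ! Suc j) = a" using l nth_label_seq[of j c] jr by (simp add: j_def)
  have lb: "label (c ! Suc j) (c ! Suc (Suc j)) = b"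
    using l nth_label_seq[of "Suc j" c] jr by (simp add: j_def nth_append)
  have "covers (c ! j) (c ! Suc j)" "covers (c ! Suc j) (c ! Suc (Suc j))"
    using maximal_chain_covers[OF c] jr by simp_all
  then obtain x' where x': "covers (c ! j) x'" "covers x' (c ! Suc (Suc j))"
    "label (c ! j) x' = b" "label x' (c ! Suc (Suc j)) = a"
    using label_swap la lb \<open>a < b\<close> by metis
  define c' where "c' = c[Suc j := x']"
  have c': "c' ! k = (if k = Suc j then x' else c ! k)" if "k \<le> r + 1" for k
    using that c by (simp add: c'_def maximal_chains_def nth_list_update)
  have "covers (c' ! k) (c' ! Suc k)" if "k \<le> r" for k
    using c'[of k] c'[of "Suc k"] that x'(1,2) maximal_chain_covers[OF c that]
    by (cases "k = j"; cases "k = Suc j") auto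
  then have "c' \<in> maximal_chains"
    using c c'[of 0] c'[of "r + 1"] jr by (auto simp: maximal_chains_def c'_def)
  moreover have "label_seq c' = us @ b # a # vs"
  proof (rule nth_equalityI)
    show "length (label_seq c') = length (us @ b # a # vs)"
      using l length_label_seq[of c] length_label_seq[of c'] by simp
    fix k assume "k < length (label_seq c')"
    then have k: "k \<le> r" by (simp add: length_label_seq)
    have swap: "(us @ a # b # vs) ! k = (us @ b # a # vs) ! k" if "k \<noteq> j" "k \<noteq> Suc j"
      using that by (cases "k < j") (auto simp: nth_append nth_Cons' j_def)
    show "label_seq c' ! k = (us @ b # a # vs) ! k"
      using nth_label_seq[OF k, of c'] nth_label_seq[OF k, of c] c'[of k] c'[of "Suc k"] k l x'(3,4)
        swap
      by (cases "k = j"; cases "k = Suc j") (auto simp: j_def nth_append)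
  qed
  ultimately show ?thesis by blast
qed

lemma ascent_swap_closed_label_seqs: "ascent_swap_closed (label_seq ` maximal_chains)"
proof (unfold ascent_swap_closed_def, intro allI impI)
  fix us a b vs assume "us @ a # b # vs \<in> label_seq ` maximal_chains" and "a < b"
  then obtain c where "c \<in> maximal_chains" "label_seq c = us @ a # b # vs" by auto
  then obtain c' where "c' \<in> maximal_chains" "label_seq c' = us @ b # a # vs"
    using label_seq_swap \<open>a < b\<close> by blast
  then show "us @ b # a # vs \<in> label_seq ` maximal_chains" by (metis image_eqI)
qed

definition descent_set :: "'a list \<Rightarrow> nat set" where
  "descent_set c = {k. 1 \<le> k \<and> k \<le> r \<and> label (c ! k) (c ! Suc k) < label (c ! (k - 1)) (c ! k)}"

lemma descent_set_subset: "descent_set c \<subseteq> {1..r}"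
  by (auto simp: descent_set_def)

lemma card_descent_set: "card (descent_set c) = des (label_seq c)"
proof -
  let ?D = "{j. Suc j < length (label_seq c) \<and> label_seq c ! Suc j < label_seq c ! j}"
  have "descent_set c = Suc ` ?D"
  proof (intro set_eqI iffI)
    fix k assume "k \<in> descent_set c"
    then obtain j where "k = Suc j" "Suc j \<le> r"
        "label (c ! Suc j) (c ! Suc (Suc j)) < label (c ! j) (c ! Suc j)"
      by (cases k) (auto simp: descent_set_def)
    then show "k \<in> Suc ` ?D" by (simp add: nth_label_seq length_label_seq)
  qed (auto simp: descent_set_def nth_label_seq length_label_seq)
  then show ?thesis by (simp add: des_def card_image)
qed

lemma label_le_if_no_descent:
  assumes "k \<le> q" and "q < p" and "p \<le> r + 1" and "\<forall>q'. k < q' \<and> q' < p \<longrightarrow> q' \<notin> descent_set c"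
  shows "label (c ! k) (c ! Suc k) \<le> label (c ! q) (c ! Suc q)"
  using assms(1,2)
proof (induction q rule: dec_induct)
  case (step q)
  then have "Suc q \<notin> descent_set c" using assms(4) by auto
  then show ?case using step assms(3) by (auto simp: descent_set_def)
qed simp

(* Labels increase between descents, so the label atom of the first cover is the least new atom
   of the whole stretch up to the next descent. *)
lemma label_atom_eq_if_no_descent:
  assumes c: "c \<in> maximal_chains" and "k < p" and "p \<le> r + 1"
    and no_descent: "\<forall>q. k < q \<and> q < p \<longrightarrow> q \<notin> descent_set c"
  shows "label_atom (c ! k) (c ! Suc k) = label_atom (c ! k) (c ! p)"
proof (rule sym, rule label_eqI(2))
  have cov: "k' \<le> r \<Longrightarrow> c ! k' < c ! Suc k'" for k' using covers_less[OF maximal_chain_covers[OF c]] .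
  let ?a = "label_atom (c ! k) (c ! Suc k)"
  have "k \<le> r" using assms(2,3) by simp
  show "?a \<in> new_atoms (c ! k) (c ! p)"
    using label_atom_minimal(1)[OF cov[OF \<open>k \<le> r\<close>]]
      new_atoms_mono_right[OF maximal_chain_mono[OF c, of "Suc k" p]]
      assms(2,3) by auto
  fix g assume g: "g \<in> new_atoms (c ! k) (c ! p)"
  then obtain q where q: "k \<le> q" "q < p" "\<not> g \<le> c ! q" "g \<le> c ! Suc q"
    using exists_step_between[of k p "\<lambda>q. g \<le> c ! q"] assms(2) by (auto simp: new_atoms_def)
  then have "g \<in> new_atoms (c ! q) (c ! Suc q)" using g by (simp add: new_atoms_def)
  then have "label (c ! q) (c ! Suc q) \<le> idx g" using label_atom_minimal(3)[OF cov] q(2) assms(3)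
    by simp
  moreover have "label (c ! k) (c ! Suc k) \<le> label (c ! q) (c ! Suc q)"
    using label_le_if_no_descent[OF q(1,2) assms(3) no_descent] .
  ultimately show "idx ?a \<le> idx g" using label_atom_minimal(2)[OF cov] assms(2,3) by simp
qed

lemma maximal_chain_eq_if_agree:
  assumes c: "c \<in> maximal_chains" and c': "c' \<in> maximal_chains"
    and "descent_set c \<subseteq> P" and "descent_set c' \<subseteq> P" and agree: "\<forall>k\<in>P. c ! k = c' ! k"
  shows "c = c'"
proof (rule maximal_chain_eqI[OF c c'])
  fix k assume "k \<le> r" and "c ! k = c' ! k"
  let ?stop = "\<lambda>p. k < p \<and> (p \<in> P \<or> p = r + 1)"
  define p where "p = (LEAST p. ?stop p)"
  have "?stop (r + 1)" using \<open>k \<le> r\<close> by simp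
  then have p: "k < p" "p \<in> P \<or> p = r + 1" "p \<le> r + 1"
    using LeastI[of ?stop] Least_le[of ?stop] by (auto simp: p_def)
  have "q \<notin> P" if "k < q" "q < p" for q using not_less_Least[of q ?stop] that by (auto simp: p_def)
  then have "\<forall>q. k < q \<and> q < p \<longrightarrow> q \<notin> descent_set c" "\<forall>q. k < q \<and> q < p \<longrightarrow> q \<notin> descent_set c'"
    using assms(3,4) by auto
  moreover have "c ! p = c' ! p" using p agree c c' by (auto simp: maximal_chains_def)
  ultimately show "label_atom (c ! k) (c ! Suc k) = label_atom (c' ! k) (c' ! Suc k)"
    using label_atom_eq_if_no_descent[OF c p(1,3)] label_atom_eq_if_no_descent[OF c' p(1,3)]
      \<open>c ! k = c' ! k\<close> by simp
qed

lemma rank_proper: "(s::'a) \<noteq> bot \<Longrightarrow> s \<noteq> top \<Longrightarrow> 1 \<le> \<rho> s \<and> \<rho> s \<le> r"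
  using rank_strict_mono[of bot s] rank_strict_mono[of s top] rank_bot rank_top
  by (simp add: bot.not_eq_extremum top.not_eq_extremum)

definition above :: "'a set \<Rightarrow> 'a \<Rightarrow> 'a set" where
  "above S z = {t \<in> insert top S. z < t}"

definition next_above :: "'a set \<Rightarrow> 'a \<Rightarrow> 'a" where
  "next_above S z = (LEAST t. t \<in> above S z)"

(* The unique maximal chain through a chain S without descents outside the ranks of S: each step
   adds the least new atom below the next element of S \<union> {top}. *)
definition greedy_step :: "'a set \<Rightarrow> 'a \<Rightarrow> 'a" where
  "greedy_step S z = sup z (label_atom z (next_above S z))"

definition greedy :: "'a set \<Rightarrow> nat \<Rightarrow> 'a" where
  "greedy S k = (greedy_step S ^^ k) bot"

definition greedy_chain :: "'a set \<Rightarrow> 'a list" where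
  "greedy_chain S = map (greedy S) [0..<r + 2]"

lemma next_above_least:
  assumes "is_chain S" and "z < top"
  shows "next_above S z \<in> above S z" "t \<in> above S z \<Longrightarrow> next_above S z \<le> t"
proof -
  have "is_chain (above S z)" using assms(1) by (auto simp: is_chain_def above_def)
  moreover have "above S z \<noteq> {}" using assms(2) by (auto simp: above_def)
  ultimately obtain m where m: "m \<in> above S z" "\<forall>t\<in>above S z. m \<le> t"
    using is_chain_has_least[of "above S z"] by auto
  then have "next_above S z = m" unfolding next_above_def by (intro Least_equality) auto
  then show "next_above S z \<in> above S z" "t \<in> above S z \<Longrightarrow> next_above S z \<le> t" using m by auto
qed

lemma covers_greedy_step:
  assumes "is_chain S" and "z < top"
  shows "covers z (greedy_step S z)" "greedy_step S z \<le> next_above S z"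
proof -
  have "z < next_above S z" using next_above_least(1)[OF assms] by (simp add: above_def)
  then have "label_atom z (next_above S z) \<in> new_atoms z (next_above S z)"
    by (rule label_atom_minimal(1))
  then show "covers z (greedy_step S z)" "greedy_step S z \<le> next_above S z"
    using \<open>z < next_above S z\<close> covers_sup_atom
    by (auto simp: greedy_step_def new_atoms_def less_imp_le)
qed

lemma greedy_Suc: "greedy S (Suc k) = greedy_step S (greedy S k)"
  by (simp add: greedy_def)

lemma greedy_invariant:
  assumes "S \<subseteq> UNIV - {bot, top}" and "is_chain S" and "k \<le> r + 1"
  shows "\<rho> (greedy S k) = k \<and> (\<forall>s\<in>S. s \<le> greedy S k \<or> greedy S k < s)"
  using assms(3)
proof (induction k)
  case 0
  have "\<forall>s\<in>S. s \<le> bot \<or> bot < s" by (metis bot.not_eq_extremum order_refl)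
  then show ?case by (simp add: greedy_def rank_bot)
next
  case (Suc k)
  then have IH: "\<rho> (greedy S k) = k" "\<forall>s\<in>S. s \<le> greedy S k \<or> greedy S k < s" by auto
  have "greedy S k \<noteq> top" using IH(1) rank_top Suc.prems by auto
  then have "greedy S k < top" by (simp add: top.not_eq_extremum)
  note step = covers_greedy_step[OF assms(2) this, folded greedy_Suc]
  have "s \<le> greedy S (Suc k) \<or> greedy S (Suc k) < s" if "s \<in> S" for s
  proof (cases "s \<le> greedy S k")
    case True then show ?thesis using covers_less[OF step(1)] by (metis less_imp_le order_trans)
  next
    case False
    then have "s \<in> above S (greedy S k)" using IH(2) that by (auto simp: above_def)
    then have "greedy S (Suc k) \<le> s"
      using next_above_least(2)[OF assms(2) \<open>greedy S k < top\<close>] step(2) order_trans by blast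
    then show ?thesis by (auto simp: less_le)
  qed
  then show ?case using rank_covers[OF step(1)] IH(1) by simp
qed

lemma greedy_less_top:
  assumes "S \<subseteq> UNIV - {bot, top}" and "is_chain S" and "k \<le> r"
  shows "greedy S k < top"
  using greedy_invariant[OF assms(1,2), of k] rank_top assms(3) top.not_eq_extremum by force

lemma greedy_chain_maximal:
  assumes "S \<subseteq> UNIV - {bot, top}" and "is_chain S"
  shows "greedy_chain S \<in> maximal_chains"
proof -
  have "\<rho> (greedy S (r + 1)) = \<rho> top" using greedy_invariant[OF assms order_refl] rank_top by simp
  then have "greedy S (r + 1) = top" using eq_if_le_rank_eq top_greatest by metis
  moreover have "covers (greedy S k) (greedy S (Suc k))" if "k \<le> r" for k
    using covers_greedy_step(1)[OF assms(2) greedy_less_top[OF assms that]]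
    by (simp add: greedy_Suc)
  ultimately show ?thesis
    by (simp add: maximal_chains_def greedy_chain_def greedy_def nth_append del: upt_Suc)
qed

lemma nth_greedy_chain: "k < r + 2 \<Longrightarrow> greedy_chain S ! k = greedy S k"
  by (simp add: greedy_chain_def del: upt_Suc)

lemma greedy_rank:
  assumes "S \<subseteq> UNIV - {bot, top}" and "is_chain S" and "s \<in> S"
  shows "greedy S (\<rho> s) = s"
proof -
  have "\<rho> s \<le> r" using rank_proper assms(1,3) by blast
  then have g: "\<rho> (greedy S (\<rho> s)) = \<rho> s" "s \<le> greedy S (\<rho> s) \<or> greedy S (\<rho> s) < s"
    using greedy_invariant[OF assms(1,2), of "\<rho> s"] assms(3) by auto
  then show ?thesis using eq_if_le_rank_eq rank_strict_mono by (metis less_irrefl)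
qed

lemma next_above_greedy_Suc:
  assumes S: "S \<subseteq> UNIV - {bot, top}" and ch: "is_chain S" and "Suc j \<le> r"
    and "greedy S (Suc j) \<notin> S"
  shows "next_above S (greedy S (Suc j)) = next_above S (greedy S j)"
proof -
  let ?z = "greedy S j" and ?z1 = "greedy S (Suc j)" and ?t = "next_above S (greedy S j)"
  have z: "?z < top" and z1: "?z1 < top" using greedy_less_top[OF S ch] assms(3) by simp_all
  have t: "?t \<in> above S ?z" "\<And>u. u \<in> above S ?z \<Longrightarrow> ?t \<le> u" using next_above_least[OF ch z] by auto
  have "?z1 \<le> ?t" using covers_greedy_step(2)[OF ch z] by (simp add: greedy_Suc)
  moreover have "?z1 \<noteq> ?t" using t(1) assms(4) z1 by (auto simp: above_def)
  ultimately have "?t \<in> above S ?z1" using t(1) by (auto simp: above_def)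
  moreover have "above S ?z1 \<subseteq> above S ?z"
    using covers_less[OF covers_greedy_step(1)[OF ch z]] by (auto simp: above_def greedy_Suc)
  ultimately show ?thesis using next_above_least[OF ch z1] t(2) by (meson antisym subsetD)
qed

(* Between two consecutive elements of S the greedy chain keeps heading for the same target t,
   and successive least new atoms below t have increasing indices. *)
lemma descent_set_greedy_chain:
  assumes S: "S \<subseteq> UNIV - {bot, top}" and ch: "is_chain S"
  shows "descent_set (greedy_chain S) \<subseteq> \<rho> ` S"
proof
  fix k assume "k \<in> descent_set (greedy_chain S)"
  then obtain j where k: "k = Suc j" "Suc j \<le> r"
    and desc: "label (greedy S (Suc j)) (greedy S (Suc (Suc j)))
        < label (greedy S j) (greedy S (Suc j))"
    by (cases k) (auto simp: descent_set_def nth_greedy_chain)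
  show "k \<in> \<rho> ` S"
  proof (rule ccontr)
    assume "k \<notin> \<rho> ` S"
    let ?z = "greedy S j" and ?z1 = "greedy S (Suc j)" and ?t = "next_above S (greedy S j)"
    have "\<rho> ?z1 = Suc j" using greedy_invariant[OF S ch, of "Suc j"] k(2) by simp
    then have "?z1 \<notin> S" using \<open>k \<notin> \<rho> ` S\<close> k(1) by force
    have z: "?z < top" and z1: "?z1 < top" using greedy_less_top[OF S ch] k(2) by simp_all
    have zt: "?z < ?t" using next_above_least(1)[OF ch z] by (simp add: above_def)
    have z1t: "?z1 < ?t"
      using next_above_least(1)[OF ch z1] next_above_greedy_Suc[OF S ch k(2) \<open>?z1 \<notin> S\<close>]
      by (simp add: above_def)
    have e1: "?z1 = sup ?z (label_atom ?z ?t)" by (simp add: greedy_Suc greedy_step_def)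
    have e2: "greedy S (Suc (Suc j)) = sup ?z1 (label_atom ?z1 ?t)"
      using next_above_greedy_Suc[OF S ch k(2) \<open>?z1 \<notin> S\<close>]
      by (simp add: greedy_Suc[of S "Suc j"] greedy_step_def)
    have "label ?z ?z1 = idx (label_atom ?z ?t)"
      using label_atom_minimal(2)[OF covers_less[OF covers_greedy_step(1)[OF ch z]]]
        label_atom_sup_label_atom[OF zt]
      by (simp add: e1[symmetric] greedy_Suc)
    moreover have "label ?z1 (greedy S (Suc (Suc j))) = idx (label_atom ?z1 ?t)"
      using label_atom_minimal(2)[OF covers_less[OF covers_greedy_step(1)[OF ch z1]]]
        label_atom_sup_label_atom[OF z1t]
      by (simp add: e2[symmetric] greedy_Suc[of S "Suc j"])
    moreover have "label_atom ?z1 ?t \<in> new_atoms ?z ?t"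
      using label_atom_minimal(1)[OF z1t] new_atoms_antimono_left
        covers_less[OF covers_greedy_step(1)[OF ch z]]
      by (metis greedy_Suc less_imp_le)
    then have "label ?z ?t \<le> idx (label_atom ?z1 ?t)" using label_atom_minimal(3)[OF zt] by blast
    ultimately show False using desc label_atom_minimal(2)[OF zt] by simp
  qed
qed

end

subsection \<open>Faces of the order complex\<close>

lemma sum_power_card_supersets:
  fixes y :: "'b::comm_semiring_1"
  assumes "finite C" and "D \<subseteq> C"
  shows "(\<Sum>P | D \<subseteq> P \<and> P \<subseteq> C. y ^ (card C - card P)) = (y + 1) ^ (card C - card D)"
proof -
  have "(\<Sum>P | D \<subseteq> P \<and> P \<subseteq> C. y ^ (card C - card P)) = (\<Sum>X\<in>Pow (C - D). y ^ card X)"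
  proof (rule sum.reindex_bij_witness[of _ "\<lambda>X. C - X" "\<lambda>P. C - P"])
    fix P assume P: "P \<in> {P. D \<subseteq> P \<and> P \<subseteq> C}"
    then show "C - (C - P) = P" "C - P \<in> Pow (C - D)" by auto
    have "finite P" using P assms(1) finite_subset by blast
    then show "y ^ card (C - P) = y ^ (card C - card P)" using P by (simp add: card_Diff_subset)
  qed (use assms(2) in auto)
  also have "\<dots> = (\<Prod>x\<in>C - D. y + 1)"
    using prod_add[of "C - D" "\<lambda>_. y" "\<lambda>_. 1"] assms(1) by simp
  also have "\<dots> = (y + 1) ^ (card C - card D)"
    using assms by (simp add: card_Diff_subset finite_subset)
  finally show ?thesis .
qed

context minimal_labelling
begin

definition proper_chains :: "'a set set" where
  "proper_chains = {S. S \<subseteq> UNIV - {bot, top} \<and> is_chain S}"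

definition marked_chains :: "('a list \<times> nat set) set" where
  "marked_chains = Sigma maximal_chains (\<lambda>c. {P. descent_set c \<subseteq> P \<and> P \<subseteq> {1..r}})"

definition restrict_chain :: "'a list \<times> nat set \<Rightarrow> 'a set" where
  "restrict_chain p = (!) (fst p) ` snd p"

lemma restrict_chain_marked:
  assumes "(c, P) \<in> marked_chains"
  shows "restrict_chain (c, P) \<in> proper_chains" "card (restrict_chain (c, P)) = card P"
    "\<rho> ` restrict_chain (c, P) = P"
proof -
  have c: "c \<in> maximal_chains" and P: "P \<subseteq> {1..r}" using assms by (auto simp: marked_chains_def)
  have rank: "\<rho> (c ! k) = k" if "k \<in> P" for k using rank_maximal_chain[OF c] P that by auto
  have "c ! k \<noteq> bot \<and> c ! k \<noteq> top" if "k \<in> P" for k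
  proof -
    have "1 \<le> k" "k \<le> r" using P that by auto
    then show ?thesis using rank[OF that] rank_bot rank_top by auto
  qed
  moreover have "is_chain ((!) c ` P)" unfolding is_chain_def
  proof (intro ballI)
    fix x y assume "x \<in> (!) c ` P" "y \<in> (!) c ` P"
    then obtain k k' where "k \<in> P" "k' \<in> P" "x = c ! k" "y = c ! k'" by blast
    moreover have "k \<le> r + 1" "k' \<le> r + 1" using P \<open>k \<in> P\<close> \<open>k' \<in> P\<close> by auto
    ultimately show "x \<le> y \<or> y \<le> x" using maximal_chain_mono[OF c] nat_le_linear by metis
  qed
  ultimately show "restrict_chain (c, P) \<in> proper_chains"
    by (auto simp: proper_chains_def restrict_chain_def)
  have "inj_on ((!) c) P" using rank by (metis inj_onI)
  then show "card (restrict_chain (c, P)) = card P" by (simp add: restrict_chain_def card_image)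
  show "\<rho> ` restrict_chain (c, P) = P" using rank by (force simp: restrict_chain_def image_image)
qed

lemma inj_on_restrict_chain: "inj_on restrict_chain marked_chains"
proof (rule inj_onI)
  fix p q assume p: "p \<in> marked_chains" and q: "q \<in> marked_chains"
    and eq: "restrict_chain p = restrict_chain q"
  obtain c P c' P' where pq: "p = (c, P)" "q = (c', P')" by (cases p, cases q)
  have "P = P'" using restrict_chain_marked(3)[of c P] restrict_chain_marked(3)[of c' P'] p q pq eq
    by simp
  have c: "c \<in> maximal_chains" "P \<subseteq> {1..r}" "descent_set c \<subseteq> P"
    and c': "c' \<in> maximal_chains" "descent_set c' \<subseteq> P"
    using p q pq \<open>P = P'\<close> by (auto simp: marked_chains_def)
  have "c ! k = c' ! k" if "k \<in> P" for k
  proof -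
    have "c ! k \<in> restrict_chain p" using that pq(1) by (simp add: restrict_chain_def)
    then have "c ! k \<in> restrict_chain q" using eq by simp
    then obtain k' where "k' \<in> P" "c ! k = c' ! k'"
      unfolding pq(2) restrict_chain_def \<open>P = P'\<close> by auto
    moreover have "\<rho> (c ! k) = k" "\<rho> (c' ! k') = k'"
      using rank_maximal_chain c c' \<open>k' \<in> P\<close> that by auto
    ultimately show ?thesis by simp
  qed
  then have "c = c'" using maximal_chain_eq_if_agree[OF c(1) c'(1) c(3) c'(2)] by blast
  then show "p = q" using pq \<open>P = P'\<close> by simp
qed

lemma restrict_chain_image: "restrict_chain ` marked_chains = proper_chains"
proof
  show "restrict_chain ` marked_chains \<subseteq> proper_chains" using restrict_chain_marked(1) by auto
  show "proper_chains \<subseteq> restrict_chain ` marked_chains"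
  proof
    fix S assume "S \<in> proper_chains"
    then have S: "S \<subseteq> UNIV - {bot, top}" and ch: "is_chain S" by (auto simp: proper_chains_def)
    have rank: "1 \<le> \<rho> s \<and> \<rho> s \<le> r" if "s \<in> S" for s using S that rank_proper by auto
    then have "\<rho> ` S \<subseteq> {1..r}" by auto
    then have "(greedy_chain S, \<rho> ` S) \<in> marked_chains" unfolding marked_chains_def
      using greedy_chain_maximal[OF S ch] descent_set_greedy_chain[OF S ch] by simp
    moreover have "greedy_chain S ! \<rho> s = s" if "s \<in> S" for s
      using greedy_rank[OF S ch that] nth_greedy_chain rank[OF that] by simp
    then have "restrict_chain (greedy_chain S, \<rho> ` S) = S"
      unfolding restrict_chain_def fst_conv snd_conv image_image by simp
    ultimately show "S \<in> restrict_chain ` marked_chains" by (metis image_eqI)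
  qed
qed

lemma bij_betw_restrict_chain: "bij_betw restrict_chain marked_chains proper_chains"
  using inj_on_restrict_chain restrict_chain_image by (rule bij_betw_imageI)

lemma card_proper_chain: "S \<in> proper_chains \<Longrightarrow> card S \<le> r"
proof -
  assume "S \<in> proper_chains"
  then obtain p where "p \<in> marked_chains" "S = restrict_chain p"
    using restrict_chain_image by blast
  moreover obtain c P where "p = (c, P)" by (cases p)
  ultimately have cP: "(c, P) \<in> marked_chains" "S = restrict_chain (c, P)" by simp_all
  then have "card S = card P" using restrict_chain_marked(2) by simp
  also have "\<dots> \<le> card {1..r}" using cP(1) by (intro card_mono) (auto simp: marked_chains_def)
  finally show ?thesis by simp
qed

lemma sum_fvec_eq_sum_proper_chains:
  "(\<Sum>j\<le>r. smult (int (fvec TYPE('a) j)) (Y ^ (r - j)))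
      = (\<Sum>S\<in>proper_chains. (Y :: int poly) ^ (r - card S))"
proof -
  have "(\<Sum>S\<in>proper_chains. Y ^ (r - card S)) =
      (\<Sum>j\<le>r. \<Sum>S | S \<in> proper_chains \<and> card S = j. Y ^ (r - card S))"
    using card_proper_chain by (intro sum.group[symmetric]) auto
  also have "\<dots> = (\<Sum>j\<le>r. smult (int (fvec TYPE('a) j)) (Y ^ (r - j)))"
  proof (intro sum.cong refl)
    fix j
    have "faces TYPE('a) j = {S \<in> proper_chains. card S = j}"
      by (auto simp: faces_def proper_chains_def)
    then show "(\<Sum>S | S \<in> proper_chains \<and> card S = j. Y ^ (r - card S))
        = smult (int (fvec TYPE('a) j)) (Y ^ (r - j))"
      by (simp add: fvec_def of_nat_mult_conv_smult)
  qed
  finally show ?thesis by simp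
qed

lemma sum_proper_chains_eq_sum_maximal_chains:
  "(\<Sum>S\<in>proper_chains. (Y :: int poly) ^ (r - card S)) =
     (\<Sum>c\<in>maximal_chains. (Y + 1) ^ (r - card (descent_set c)))"
proof -
  have "(\<Sum>S\<in>proper_chains. Y ^ (r - card S))
      = (\<Sum>p\<in>marked_chains. Y ^ (r - card (restrict_chain p)))"
    by (rule sum.reindex_bij_betw[OF bij_betw_restrict_chain, symmetric])
  also have "\<dots> = (\<Sum>(c, P)\<in>marked_chains. Y ^ (card {1..r} - card P))"
    using restrict_chain_marked(2) by (intro sum.cong) auto
  also have "\<dots> =
      (\<Sum>c\<in>maximal_chains. \<Sum>P | descent_set c \<subseteq> P \<and> P \<subseteq> {1..r}. Y ^ (card {1..r} - card P))"
    unfolding marked_chains_def using finite_maximal_chains by (subst sum.Sigma) auto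
  also have "\<dots> = (\<Sum>c\<in>maximal_chains. (Y + 1) ^ (r - card (descent_set c)))"
  proof (rule sum.cong[OF refl])
    fix c
    show "(\<Sum>P | descent_set c \<subseteq> P \<and> P \<subseteq> {1..r}. Y ^ (card {1..r} - card P)) =
      (Y + 1) ^ (r - card (descent_set c))"
      using sum_power_card_supersets[OF _ descent_set_subset[of c], of Y] by simp
  qed
  finally show ?thesis .
qed

lemma hvec_eq_card_des:
  assumes "d \<le> r"
  shows "hvec TYPE('a) r d = int (card {s \<in> label_seq ` maximal_chains. des s = d})"
proof -
  have "[:-1, 1:] + 1 = (monom 1 1 :: int poly)" by (simp add: one_pCons monom_altdef)
  then have "hvec TYPE('a) r d
      = coeff (\<Sum>c\<in>maximal_chains. monom 1 (r - card (descent_set c))) (r - d)"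
    unfolding hvec_def sum_fvec_eq_sum_proper_chains sum_proper_chains_eq_sum_maximal_chains
    by (simp add: monom_power)
  also have "\<dots> = (\<Sum>c\<in>maximal_chains. if card (descent_set c) = d then 1 else 0)"
    unfolding coeff_sum
  proof (intro sum.cong refl)
    fix c
    have "card (descent_set c) \<le> r" using card_mono[OF _ descent_set_subset[of c]] by simp
    then show "coeff (monom 1 (r - card (descent_set c))) (r - d) =
        (if card (descent_set c) = d then 1 else 0)"
      using assms by auto
  qed
  also have "\<dots> = int (card {c \<in> maximal_chains. des (label_seq c) = d})"
    using finite_maximal_chains by (simp add: sum.If_cases Int_def card_descent_set)
  also have "card {c \<in> maximal_chains. des (label_seq c) = d}
      = card {s \<in> label_seq ` maximal_chains. des s = d}"
  proof -
    have "inj_on label_seq {c \<in> maximal_chains. des (label_seq c) = d}"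
      using inj_on_label_seq by (rule inj_on_subset) auto
    then have "card (label_seq ` {c \<in> maximal_chains. des (label_seq c) = d}) =
        card {c \<in> maximal_chains. des (label_seq c) = d}"
      by (rule card_image)
    moreover have "label_seq ` {c \<in> maximal_chains. des (label_seq c) = d} =
        {s \<in> label_seq ` maximal_chains. des s = d}"
      by auto
    ultimately show ?thesis by simp
  qed
  finally show ?thesis .
qed

end

theorem theorem1p1:
  fixes \<rho> :: "'a::{finite,bounded_lattice} \<Rightarrow> nat" and r i :: nat
  assumes "geometric_lattice \<rho>"
    and "\<rho> top = r + 1"
    and "1 \<le> i" and "2 * i \<le> r"
  shows "hvec TYPE('a) r (i - 1) \<le> hvec TYPE('a) r i \<and> hvec TYPE('a) r i \<le> hvec TYPE('a) r (r - i)"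
proof -
  obtain idx :: "'a \<Rightarrow> nat" where "inj idx"
    using finite_imp_inj_to_nat_seg[of "UNIV :: 'a set"] by auto
  interpret minimal_labelling \<rho> idx r
    using assms(1,2) \<open>inj idx\<close> by unfold_locales
  let ?V = "label_seq ` maximal_chains" and ?n = "r + 1"
  have V: "finite ?V" "\<forall>s\<in>?V. distinct s \<and> length s = ?n" "ascent_swap_closed ?V"
    using finite_maximal_chains distinct_label_seq length_label_seq ascent_swap_closed_label_seqs
    by auto
  have "card {s \<in> ?V. des s = i - 1} \<le> card {s \<in> ?V. des s = i}"
    using card_des_mono_if_ascent_swap_closed[OF V, of "i - 1"] assms(3,4) by simp
  moreover have "card {s \<in> ?V. des s = i} \<le> card {s \<in> ?V. des s = r - i}"
    using card_des_le_mirror_if_ascent_swap_closed[OF V, of i] assms(4) by simp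
  ultimately show ?thesis using hvec_eq_card_des assms(4) by simp
qed

end
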